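(* Let $\Gamma=(H,\iota,\sigma,m)$ be a skew Brauer graph, $H'\subseteq H$ stable under $\iota$, and $(h_1,r_1),(h_2,r_2)$ two distinct maximal sectors of elements of $H'$ in $\Gamma$. For any $0$-homogeneous grading $d:H\to\mathbb{Z}/2\mathbb{Z}$ of $\Gamma$, $$\mu^+_{(h_1,r_1)}\big(\mu^+_{(h_2,r_2)}(\Gamma,d)\big)=\mu^+_{(h_2,r_2)}\big(\mu^+_{(h_1,r_1)}(\Gamma,d)\big).$$
   Context: A skew Brauer graph is $\Gamma=(H,\iota,\sigma,m)$ with $H$ finite, $\iota$ an involution (possibly with fixed points; $H_\times$ = set of fixed points, $H_\circ=H\setminus H_\times$), $\sigma$ a permutation, $m:H\to\mathbb{Z}_{>0}$ constant on $\sigma$-orbits; no half-edge is fixed by both $\iota$ and $\sigma$. A grading $d:H\to\mathbb{Z}/2\mathbb{Z}$ is $0$-homogeneous if $\sum_{h\in v}d(h)=0$ for every $\sigma$-orbit $v$. A sector of elements of $H'$ is a pair $(h,r)\in H\times\mathbb{Z}_{\ge0}$ with $r+1$ the least $r'\ge0$ such that $\sigma^{r'}h\notin H'$; it is maximal if also $\sigma^{-1}h\notin H'$. The graded generalized Kauer move of a sector is $\mu^+_{(h,r)}(\Gamma,d)=(H,\iota,\sigma_{(h,r)},m_{(h,r)},d_{(h,r)})$ where $\sigma_{(h,r)}=(h\ \ \sigma^{r+1}h)\circ\sigma\circ(\sigma^rh\ \ \iota\sigma^{r+1}h)$ (permutations applied right to left), $m_{(h,r)}(\sigma^ih)=m(\iota\sigma^{r+1}h)$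 for $0\le i\le r$, $m_{(h,r)}=m$ elsewhere, and, with $\epsilon=0$ if $\sigma^{r+1}h\in H_\circ$ and $\epsilon=1$ if $\sigma^{r+1}h\in H_\times$: $d_{(h,r)}(\iota\sigma^{r+1}h)=-\sum_{i=0}^rd(\sigma^ih)-\epsilon$; $d_{(h,r)}(\sigma^rh)=d(\iota\sigma^{r+1}h)+d(\sigma^rh)+\epsilon$ if $\iota\sigma^{r+1}h\ne\sigma^{-1}h$, and $=\sum_{i=-1}^rd(\sigma^ih)+d(\sigma^rh)+\epsilon$ otherwise; $d_{(h,r)}(\sigma^{-1}h)=\sum_{i=-1}^rd(\sigma^ih)$ if $\iota\sigma^{r+1}h\ne\sigma^{-1}h$, and $=d_{(h,r)}(\iota\sigma^{r+1}h)$ otherwise; $d_{(h,r)}(h')=d(h')$ for all other $h'$. The result is again a $0$-homogeneous graded skew Brauer graph, and a maximal sector distinct from $(h,r)$ remains a sector after the move, so both sides are defined. *)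

theory Defs
  imports "HOL-Combinatorics.Permutations" "HOL-Library.Z2"
begin

text \<open>Permutations of H are modelled with
  the library notion \<open>permutes\<close> (identity outside H).\<close>

definition skew_brauer_graph ::
  "'a set \<Rightarrow> ('a \<Rightarrow> 'a) \<Rightarrow> ('a \<Rightarrow> 'a) \<Rightarrow> ('a \<Rightarrow> nat) \<Rightarrow> bool" where
  "skew_brauer_graph H \<iota> \<sigma> m \<longleftrightarrow>
     finite H \<and> \<iota> permutes H \<and> (\<forall>h\<in>H. \<iota> (\<iota> h) = h) \<and> \<sigma> permutes H \<and>
     (\<forall>h\<in>H. m h > 0) \<and> (\<forall>h\<in>H. m (\<sigma> h) = m h) \<and>
     (\<forall>h\<in>H. \<not> (\<iota> h = h \<and> \<sigma> h = h))"

definition sigma_orbit :: "('a \<Rightarrow> 'a) \<Rightarrow> 'a \<Rightarrow> 'a set" where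
  "sigma_orbit \<sigma> h = {(\<sigma> ^^ n) h | n. True}"

text \<open>Gradings take values in Z/2Z, represented by the field \<open>bit\<close>.\<close>

definition zero_homogeneous :: "'a set \<Rightarrow> ('a \<Rightarrow> 'a) \<Rightarrow> ('a \<Rightarrow> bit) \<Rightarrow> bool" where
  "zero_homogeneous H \<sigma> d \<longleftrightarrow> (\<forall>h\<in>H. (\<Sum>x\<in>sigma_orbit \<sigma> h. d x) = 0)"

definition is_sector :: "'a set \<Rightarrow> ('a \<Rightarrow> 'a) \<Rightarrow> 'a set \<Rightarrow> 'a \<Rightarrow> nat \<Rightarrow> bool" where
  "is_sector H \<sigma> H' h r \<longleftrightarrow> h \<in> H \<and>
     (\<forall>i\<le>r. (\<sigma> ^^ i) h \<in> H') \<and> (\<sigma> ^^ (Suc r)) h \<notin> H'"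

definition is_maximal_sector :: "'a set \<Rightarrow> ('a \<Rightarrow> 'a) \<Rightarrow> 'a set \<Rightarrow> 'a \<Rightarrow> nat \<Rightarrow> bool" where
  "is_maximal_sector H \<sigma> H' h r \<longleftrightarrow> is_sector H \<sigma> H' h r \<and> inv \<sigma> h \<notin> H'"

definition swap_perm :: "'a \<Rightarrow> 'a \<Rightarrow> 'a \<Rightarrow> 'a" where
  "swap_perm a b x = (if x = a then b else if x = b then a else x)"

text \<open>The graded generalized Kauer move of the sector (h,r). Since H and iota are
  unchanged, the move acts on the triple (sigma, m, d).\<close>

definition kauer_move ::
  "('a \<Rightarrow> 'a) \<Rightarrow> ('a \<Rightarrow> 'a) \<times> ('a \<Rightarrow> nat) \<times> ('a \<Rightarrow> bit) \<Rightarrow> 'a \<Rightarrow> nat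
   \<Rightarrow> ('a \<Rightarrow> 'a) \<times> ('a \<Rightarrow> nat) \<times> ('a \<Rightarrow> bit)" where
  "kauer_move \<iota> smd h r =
     (let \<sigma> = fst smd; m = fst (snd smd); d = snd (snd smd);
          s = (\<lambda>i. (\<sigma> ^^ i) h);
          e = s (Suc r);
          ie = \<iota> e;
          hm = inv \<sigma> h;
          \<epsilon> = (if \<iota> e = e then (1::bit) else 0);
          S = (\<Sum>i\<le>r. d (s i));
          \<sigma>' = swap_perm h e \<circ> \<sigma> \<circ> swap_perm (s r) ie;
          m' = (\<lambda>x. if (\<exists>i\<le>r. x = s i) then m ie else m x);
          d_ie = - S - \<epsilon>;
          d' = (\<lambda>x. if x = ie then d_ie
                    else if x = s r then
                      (if ie \<noteq> hm then d ie + d (s r) + \<epsilon>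
                       else (d hm + S) + d (s r) + \<epsilon>)
                    else if x = hm then
                      (if ie \<noteq> hm then d hm + S else d_ie)
                    else d x)
      in (\<sigma>', m', d'))"

end

theory Submission
  imports Defs
begin

text \<open>The move of a sector (h, r) changes \<sigma> only by the transpositions (h  \<sigma>^(r+1) h) and
  (\<sigma>^r h  \<iota> \<sigma>^(r+1) h), m only on the sector, and d only at \<sigma>^r h, \<iota> \<sigma>^(r+1) h and
  \<sigma>^-1 h. Two distinct maximal sectors of H' have disjoint element sets inside H', while their
  exits \<sigma>^(r+1) h, the \<iota>-images of the exits and their predecessors \<sigma>^-1 h lie outside H'.
  Hence each move leaves the other sector, its exit and its degree sum untouched; the only datum
  that can change is the predecessor: if \<sigma>^-1 h1 = \<iota> \<sigma>^(r2+1) h2, the move of (h2, r2) makes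
  \<sigma>^r2 h2 the new predecessor of h1. Written in terms of this local data, both composites
  multiply \<sigma> by the same commuting transpositions, and the two gradings agree by a finite case
  check in Z/2Z.\<close>

text \<open>The \<epsilon> of the move; a constant of its own so that the simplifier does not split on
  \<iota> e = e.\<close>

definition fixed_point_indicator :: "('a \<Rightarrow> 'a) \<Rightarrow> 'a \<Rightarrow> bit" where
  "fixed_point_indicator \<iota> e = (if \<iota> e = e then 1 else 0)"

text \<open>The move of a sector expressed through its local data: first element h, last element
  l = \<sigma>^r h, exit e = \<sigma>^(r+1) h, predecessor p = \<sigma>^-1 h, element set seg and degree sum S.
  A move performed after another one can then be described by the data of the original \<sigma>.\<close>

definition regrade :: "('a \<Rightarrow> 'a) \<Rightarrow> ('a \<Rightarrow> bit) \<Rightarrow> 'a \<Rightarrow> 'a \<Rightarrow> 'a \<Rightarrow> bit \<Rightarrow> 'a \<Rightarrow> bit" where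
  "regrade \<iota> d l e p S x =
     (let \<epsilon> = fixed_point_indicator \<iota> e in
      if x = \<iota> e then - S - \<epsilon>
      else if x = l then (if \<iota> e = p then d p + S else d (\<iota> e)) + d l + \<epsilon>
      else if x = p then d p + S
      else d x)"

fun kauer_step ::
  "('a \<Rightarrow> 'a) \<Rightarrow> ('a \<Rightarrow> 'a) \<times> ('a \<Rightarrow> nat) \<times> ('a \<Rightarrow> bit) \<Rightarrow> 'a \<Rightarrow> 'a \<Rightarrow> 'a \<Rightarrow> 'a \<Rightarrow> 'a set
   \<Rightarrow> bit \<Rightarrow> ('a \<Rightarrow> 'a) \<times> ('a \<Rightarrow> nat) \<times> ('a \<Rightarrow> bit)" where
  "kauer_step \<iota> (\<sigma>, m, d) h l e p seg S =
     (transpose h e \<circ> \<sigma> \<circ> transpose l (\<iota> e),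
      \<lambda>x. if x \<in> seg then m (\<iota> e) else m x,
      regrade \<iota> d l e p S)"

abbreviation sector_elems :: "('a \<Rightarrow> 'a) \<Rightarrow> 'a \<Rightarrow> nat \<Rightarrow> 'a set" where
  "sector_elems \<sigma> h r \<equiv> (\<lambda>i. (\<sigma> ^^ i) h) ` {..r}"

lemma swap_perm_eq_transpose: "swap_perm = transpose"
  by (simp add: fun_eq_iff swap_perm_def transpose_def)

lemma kauer_move_eq_kauer_step:
  "kauer_move \<iota> (\<sigma>, m, d) h r =
     kauer_step \<iota> (\<sigma>, m, d) h ((\<sigma> ^^ r) h) ((\<sigma> ^^ Suc r) h) (inv \<sigma> h)
       (sector_elems \<sigma> h r) (\<Sum>i\<le>r. d ((\<sigma> ^^ i) h))"
  by (auto simp: kauer_move_def regrade_def fixed_point_indicator_def swap_perm_eq_transpose Let_def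
      fun_eq_iff)

lemma regrade_commute:
  fixes d :: "'a \<Rightarrow> bit"
  assumes "l1 \<in> P" "l2 \<in> P" "\<iota> e1 \<notin> P" "\<iota> e2 \<notin> P" "p1 \<notin> P" "p2 \<notin> P"
    and "l1 \<noteq> l2" "\<iota> e1 \<noteq> \<iota> e2" "p1 \<noteq> p2"
  shows "regrade \<iota> (regrade \<iota> d l2 e2 p2 S2) l1 e1 (transpose l2 (\<iota> e2) p1) S1 =
         regrade \<iota> (regrade \<iota> d l1 e1 p1 S1) l2 e2 (transpose l1 (\<iota> e1) p2) S2"
    (is "?lhs = ?rhs")
proof
  fix x
  have "l1 \<noteq> \<iota> e1" "l1 \<noteq> \<iota> e2" "l1 \<noteq> p1" "l1 \<noteq> p2"
    "l2 \<noteq> \<iota> e1" "l2 \<noteq> \<iota> e2" "l2 \<noteq> p1" "l2 \<noteq> p2"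
    using assms by auto
  moreover have "x = \<iota> e1 \<or> x = \<iota> e2 \<or> x = p1 \<or> x = p2 \<or> x = l1 \<or> x = l2 \<or>
      x \<notin> {\<iota> e1, \<iota> e2, p1, p2, l1, l2}"
    by blast
  ultimately show "?lhs x = ?rhs x"
    using assms(7-9)
    \<comment> \<open>with bit addition kept symbolic, AC normalisation settles every case\<close>
    by (elim disjE) (simp_all add: regrade_def Let_def transpose_def ac_simps del: add_bit_eq_xor)
qed

lemma transpose_comp_commute:
  "{a, b} \<inter> {c, d} = {} \<Longrightarrow> transpose a b \<circ> transpose c d = transpose c d \<circ> transpose a b"
  by (auto simp: fun_eq_iff transpose_def)

lemma kauer_step_commute:
  assumes "h1 \<in> seg1" "l1 \<in> seg1" "h2 \<in> seg2" "l2 \<in> seg2"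
    and "seg1 \<inter> seg2 = {}" "seg1 \<subseteq> P" "seg2 \<subseteq> P"
    and "e1 \<notin> P" "\<iota> e1 \<notin> P" "p1 \<notin> P" "e2 \<notin> P" "\<iota> e2 \<notin> P" "p2 \<notin> P"
    and "e1 \<noteq> e2" "\<iota> e1 \<noteq> \<iota> e2" "p1 \<noteq> p2"
  shows "kauer_step \<iota> (kauer_step \<iota> (\<sigma>, m, d) h2 l2 e2 p2 seg2 S2) h1 l1 e1
           (transpose l2 (\<iota> e2) p1) seg1 S1 =
         kauer_step \<iota> (kauer_step \<iota> (\<sigma>, m, d) h1 l1 e1 p1 seg1 S1) h2 l2 e2
           (transpose l1 (\<iota> e1) p2) seg2 S2"
proof -
  have "transpose h1 e1 \<circ> transpose h2 e2 = transpose h2 e2 \<circ> transpose h1 e1"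
    "transpose l1 (\<iota> e1) \<circ> transpose l2 (\<iota> e2) = transpose l2 (\<iota> e2) \<circ> transpose l1 (\<iota> e1)"
    using assms by (intro transpose_comp_commute; blast)+
  then have perm:
    "transpose h1 e1 \<circ> (transpose h2 e2 \<circ> \<sigma> \<circ> transpose l2 (\<iota> e2)) \<circ> transpose l1 (\<iota> e1) =
      transpose h2 e2 \<circ> (transpose h1 e1 \<circ> \<sigma> \<circ> transpose l1 (\<iota> e1)) \<circ> transpose l2 (\<iota> e2)"
    by (metis comp_assoc)
  have grading: "regrade \<iota> (regrade \<iota> d l2 e2 p2 S2) l1 e1 (transpose l2 (\<iota> e2) p1) S1 =
         regrade \<iota> (regrade \<iota> d l1 e1 p1 S1) l2 e2 (transpose l1 (\<iota> e1) p2) S2"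
    using assms by (intro regrade_commute[where P = P]) auto
  show ?thesis
    unfolding kauer_step.simps perm grading using assms by (auto simp: fun_eq_iff)
qed

lemma funpow_agree_on_orbit:
  assumes "\<And>j. j < n \<Longrightarrow> g ((f ^^ j) x) = f ((f ^^ j) x)" and "i \<le> n"
  shows "(g ^^ i) x = (f ^^ i) x"
  using assms(2) by (induction i) (simp_all add: assms(1))

lemma funpow_transpose_comp_agree:
  assumes "\<And>j. j \<le> r \<Longrightarrow> (\<sigma> ^^ j) h \<notin> {c, e} \<and> (\<sigma> ^^ Suc j) h \<notin> {a, b}" and "i \<le> Suc r"
  shows "((transpose a b \<circ> \<sigma> \<circ> transpose c e) ^^ i) h = (\<sigma> ^^ i) h"
  using assms by (intro funpow_agree_on_orbit[where n = "Suc r"]) (auto simp: less_Suc_eq_le)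

lemma inv_transpose_comp_apply:
  assumes "bij \<sigma>" "x \<notin> {a, b}"
  shows "inv (transpose a b \<circ> \<sigma> \<circ> transpose c e) x = transpose c e (inv \<sigma> x)"
  using assms by (simp add: o_inv_distrib bij_comp)

lemma sector_length_unique:
  assumes "is_sector H \<sigma> P h r" "is_sector H \<sigma> P h r'"
  shows "r = r'"
  using assms unfolding is_sector_def by (meson Suc_leI linorder_neqE_nat)

lemma sector_funpow_neq_maximal_start:
  assumes "inj \<sigma>" "is_sector H \<sigma> P h r" "inv \<sigma> h' \<notin> P" "0 < k" "k \<le> Suc r"
  shows "(\<sigma> ^^ k) h \<noteq> h'"
proof
  assume "(\<sigma> ^^ k) h = h'"
  then have "\<sigma> ((\<sigma> ^^ (k - 1)) h) = h'"
    using \<open>0 < k\<close> by (metis Suc_pred' funpow.simps(2) o_apply)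
  then have "inv \<sigma> h' = (\<sigma> ^^ (k - 1)) h"
    using \<open>inj \<sigma>\<close> by (metis inv_f_f)
  moreover have "(\<sigma> ^^ (k - 1)) h \<in> P"
    using assms(2,5) unfolding is_sector_def by simp
  ultimately show False
    using assms(3) by simp
qed

lemma maximal_sectors_funpow_neq:
  assumes "inj \<sigma>" "is_maximal_sector H \<sigma> P h1 r1" "is_maximal_sector H \<sigma> P h2 r2"
    and "(h1, r1) \<noteq> (h2, r2)" "i \<le> j" "j \<le> r2"
  shows "(\<sigma> ^^ i) h1 \<noteq> (\<sigma> ^^ j) h2"
proof
  assume "(\<sigma> ^^ i) h1 = (\<sigma> ^^ j) h2"
  then have "(\<sigma> ^^ i) h1 = (\<sigma> ^^ i) ((\<sigma> ^^ (j - i)) h2)"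
    using \<open>i \<le> j\<close> by (metis funpow_add le_add_diff_inverse o_apply)
  then have start: "h1 = (\<sigma> ^^ (j - i)) h2"
    using \<open>inj \<sigma>\<close> by (simp add: inj_eq)
  show False
  proof (cases "i = j")
    case True
    then have "is_sector H \<sigma> P h1 r1" "is_sector H \<sigma> P h1 r2"
      using assms(2,3) start unfolding is_maximal_sector_def by simp_all
    then show False
      using sector_length_unique start True assms(4) by fastforce
  next
    case False
    have "is_sector H \<sigma> P h2 r2" "inv \<sigma> h1 \<notin> P" "j - i \<le> Suc r2"
      using assms(2,3,6) unfolding is_maximal_sector_def by simp_all
    moreover have "0 < j - i"
      using False \<open>i \<le> j\<close> by simp
    ultimately show False
      using sector_funpow_neq_maximal_start[OF \<open>inj \<sigma>\<close>] start by blast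
  qed
qed

lemma maximal_sectors_disjoint:
  assumes "inj \<sigma>" "is_maximal_sector H \<sigma> P h1 r1" "is_maximal_sector H \<sigma> P h2 r2"
    and "(h1, r1) \<noteq> (h2, r2)"
  shows "sector_elems \<sigma> h1 r1 \<inter> sector_elems \<sigma> h2 r2 = {}"
proof (rule ccontr)
  assume "\<not> ?thesis"
  then obtain i j where "i \<le> r1" "j \<le> r2" "(\<sigma> ^^ i) h1 = (\<sigma> ^^ j) h2"
    by auto
  then show False
    using maximal_sectors_funpow_neq[OF assms] maximal_sectors_funpow_neq[OF assms(1,3,2) assms(4)[symmetric]]
    by (metis nle_le)
qed

lemma maximal_sector_boundary:
  assumes "is_maximal_sector H \<sigma> P h r" "\<iota> ` P \<subseteq> P" "\<And>x. \<iota> (\<iota> x) = x"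
  shows "h \<in> P" "sector_elems \<sigma> h r \<subseteq> P" "(\<sigma> ^^ Suc r) h \<notin> P"
    and "\<iota> ((\<sigma> ^^ Suc r) h) \<notin> P" "inv \<sigma> h \<notin> P"
proof -
  show "h \<in> P" "sector_elems \<sigma> h r \<subseteq> P" "(\<sigma> ^^ Suc r) h \<notin> P" "inv \<sigma> h \<notin> P"
    using assms(1) unfolding is_maximal_sector_def is_sector_def by (auto dest: spec[of _ 0])
  then show "\<iota> ((\<sigma> ^^ Suc r) h) \<notin> P"
    using assms(2,3) by (metis image_subset_iff)
qed

lemma kauer_move_after_kauer_move:
  assumes "bij \<sigma>" "\<And>x. \<iota> (\<iota> x) = x" "\<iota> ` P \<subseteq> P"
    and max1: "is_maximal_sector H \<sigma> P h1 r1" and max2: "is_maximal_sector H \<sigma> P h2 r2"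
    and "(h1, r1) \<noteq> (h2, r2)"
  shows "kauer_move \<iota> (kauer_move \<iota> (\<sigma>, m, d) h2 r2) h1 r1 =
    kauer_step \<iota> (kauer_move \<iota> (\<sigma>, m, d) h2 r2) h1 ((\<sigma> ^^ r1) h1) ((\<sigma> ^^ Suc r1) h1)
      (transpose ((\<sigma> ^^ r2) h2) (\<iota> ((\<sigma> ^^ Suc r2) h2)) (inv \<sigma> h1))
      (sector_elems \<sigma> h1 r1) (\<Sum>i\<le>r1. d ((\<sigma> ^^ i) h1))"
proof -
  define l2 e2 where "l2 = (\<sigma> ^^ r2) h2" and "e2 = (\<sigma> ^^ Suc r2) h2"
  define \<sigma>2 where "\<sigma>2 = transpose h2 e2 \<circ> \<sigma> \<circ> transpose l2 (\<iota> e2)"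
  define d2 where "d2 = regrade \<iota> d l2 e2 (inv \<sigma> h2) (\<Sum>i\<le>r2. d ((\<sigma> ^^ i) h2))"
  obtain m2 where move2: "kauer_move \<iota> (\<sigma>, m, d) h2 r2 = (\<sigma>2, m2, d2)"
    by (simp add: kauer_move_eq_kauer_step \<sigma>2_def d2_def l2_def e2_def)
  have "inj \<sigma>"
    using \<open>bij \<sigma>\<close> by (rule bij_is_inj)
  note B1 = maximal_sector_boundary[OF max1 assms(3,2)]
  note B2 = maximal_sector_boundary[OF max2 assms(3,2), folded l2_def e2_def]
  have "l2 \<in> sector_elems \<sigma> h2 r2" "h2 \<in> sector_elems \<sigma> h2 r2"
    unfolding l2_def by (auto intro: image_eqI[where x = 0])
  moreover have "(\<sigma> ^^ i) h1 \<in> sector_elems \<sigma> h1 r1" if "i \<le> r1" for i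
    using that by simp
  ultimately have outside: "(\<sigma> ^^ i) h1 \<notin> {l2, \<iota> e2, inv \<sigma> h2}" "(\<sigma> ^^ i) h1 \<noteq> h2"
    if "i \<le> r1" for i
    using B1(2) B2(4,5) maximal_sectors_disjoint[OF \<open>inj \<sigma>\<close> max1 max2 assms(6)] that
    by (auto dest!: subsetD)
  have "(\<sigma> ^^ Suc i) h1 \<noteq> h2" if "i \<le> r1" for i
    using sector_funpow_neq_maximal_start[OF \<open>inj \<sigma>\<close>, of H P h1 r1 h2 "Suc i"] max1 max2 that
    unfolding is_maximal_sector_def by simp
  moreover have "(\<sigma> ^^ Suc i) h1 \<noteq> e2" if "i \<le> r1" for i
    using outside(1)[OF that] \<open>inj \<sigma>\<close> unfolding l2_def e2_def by (auto simp: inj_eq)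
  ultimately have orbit: "(\<sigma>2 ^^ i) h1 = (\<sigma> ^^ i) h1" if "i \<le> Suc r1" for i
    unfolding \<sigma>2_def using outside(1) that by (intro funpow_transpose_comp_agree) auto
  have pred: "inv \<sigma>2 h1 = transpose l2 (\<iota> e2) (inv \<sigma> h1)"
    unfolding \<sigma>2_def using \<open>bij \<sigma>\<close> outside(2)[of 0] B1(1) B2(3)
    by (intro inv_transpose_comp_apply) auto
  have sum: "(\<Sum>i\<le>r1. d2 ((\<sigma>2 ^^ i) h1)) = (\<Sum>i\<le>r1. d ((\<sigma> ^^ i) h1))"
    using orbit outside(1) by (intro sum.cong) (auto simp: d2_def regrade_def)
  have elems: "sector_elems \<sigma>2 h1 r1 = sector_elems \<sigma> h1 r1"
    using orbit by (intro image_cong) auto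
  have last: "(\<sigma>2 ^^ r1) h1 = (\<sigma> ^^ r1) h1" and exit: "(\<sigma>2 ^^ Suc r1) h1 = (\<sigma> ^^ Suc r1) h1"
    by (rule orbit; simp)+
  have "kauer_move \<iota> (\<sigma>2, m2, d2) h1 r1 =
    kauer_step \<iota> (\<sigma>2, m2, d2) h1 ((\<sigma> ^^ r1) h1) ((\<sigma> ^^ Suc r1) h1)
      (transpose l2 (\<iota> e2) (inv \<sigma> h1)) (sector_elems \<sigma> h1 r1) (\<Sum>i\<le>r1. d ((\<sigma> ^^ i) h1))"
    unfolding kauer_move_eq_kauer_step last exit pred sum elems ..
  then show ?thesis
    unfolding move2 l2_def e2_def .
qed

lemma skew_brauer_graph_bij: "skew_brauer_graph H \<iota> \<sigma> m \<Longrightarrow> bij \<sigma>"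
  unfolding skew_brauer_graph_def by (blast intro: permutes_bij)

lemma skew_brauer_graph_involution: "skew_brauer_graph H \<iota> \<sigma> m \<Longrightarrow> \<iota> (\<iota> x) = x"
  unfolding skew_brauer_graph_def by (metis permutes_not_in)

theorem proposition3p15:
  fixes H H' :: "'a set" and \<iota> \<sigma> :: "'a \<Rightarrow> 'a" and m :: "'a \<Rightarrow> nat"
    and d :: "'a \<Rightarrow> bit" and h1 h2 :: 'a and r1 r2 :: nat
  assumes "skew_brauer_graph H \<iota> \<sigma> m"
    and "H' \<subseteq> H" and "\<iota> ` H' \<subseteq> H'"
    and "is_maximal_sector H \<sigma> H' h1 r1"
    and "is_maximal_sector H \<sigma> H' h2 r2"
    and "(h1, r1) \<noteq> (h2, r2)"
    and "zero_homogeneous H \<sigma> d"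
  shows "kauer_move \<iota> (kauer_move \<iota> (\<sigma>, m, d) h2 r2) h1 r1
       = kauer_move \<iota> (kauer_move \<iota> (\<sigma>, m, d) h1 r1) h2 r2"
proof -
  have "bij \<sigma>" and invol: "\<And>x. \<iota> (\<iota> x) = x"
    using assms(1) by (simp_all add: skew_brauer_graph_bij skew_brauer_graph_involution)
  then have "inj \<sigma>" "inj (inv \<sigma>)"
    by (simp_all add: bij_is_inj bij_imp_bij_inv)
  note B1 = maximal_sector_boundary[OF assms(4,3) invol]
  note B2 = maximal_sector_boundary[OF assms(5,3) invol]
  have disjoint: "sector_elems \<sigma> h1 r1 \<inter> sector_elems \<sigma> h2 r2 = {}"
    using maximal_sectors_disjoint[OF \<open>inj \<sigma>\<close> assms(4-6)] .
  have ends: "h1 \<in> sector_elems \<sigma> h1 r1" "(\<sigma> ^^ r1) h1 \<in> sector_elems \<sigma> h1 r1"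
    "h2 \<in> sector_elems \<sigma> h2 r2" "(\<sigma> ^^ r2) h2 \<in> sector_elems \<sigma> h2 r2"
    by (auto intro: image_eqI[where x = 0])
  then have "(\<sigma> ^^ Suc r1) h1 \<noteq> (\<sigma> ^^ Suc r2) h2" "inv \<sigma> h1 \<noteq> inv \<sigma> h2"
    using disjoint \<open>inj \<sigma>\<close> \<open>inj (inv \<sigma>)\<close> by (auto simp: inj_eq)
  moreover from this have "\<iota> ((\<sigma> ^^ Suc r1) h1) \<noteq> \<iota> ((\<sigma> ^^ Suc r2) h2)"
    by (metis invol)
  ultimately show ?thesis
    unfolding kauer_move_after_kauer_move[OF \<open>bij \<sigma>\<close> invol assms(3-6)]
      kauer_move_after_kauer_move[OF \<open>bij \<sigma>\<close> invol assms(3,5,4) assms(6)[symmetric]]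
    unfolding kauer_move_eq_kauer_step
    using ends disjoint B1 B2 by (intro kauer_step_commute[where P = H'])
qed

end
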